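(* Let $\mathcal{A}$ be an alternative $W^{*}$-factor, $\mathcal{B}$ an alternative complex $\ast$-algebra, and $\Phi:\mathcal{A}\to\mathcal{B}$ a bijection preserving product $ab+ba^{*}$ (resp. $ab-ba^{*}$). Let $p_{1}\in\mathcal{A}$ be a projection with $p_{1}\neq 1_{\mathcal{A}}$, $p_{2}=1_{\mathcal{A}}-p_{1}$, and $\mathcal{A}_{ij}=p_{i}\mathcal{A}p_{j}$. Then for all $a_{11},b_{11}\in\mathcal{A}_{11}$ and $c_{22},d_{22}\in\mathcal{A}_{22}$: (i) $\Phi(a_{11}+b_{11})=\Phi(a_{11})+\Phi(b_{11})$ and (ii) $\Phi(c_{22}+d_{22})=\Phi(c_{22})+\Phi(d_{22})$.
   Context: An alternative $W^{*}$-factor is a prime alternative $C^{*}$-algebra (complete normed alternative complex $\ast$-algebra with $\|a^{*}a\|=\|a\|^{2}$) that is a dual Banach space; it is unital. A projection is a nonzero self-adjoint idempotent. $\mathcal{A}_{ij}$ are the Peirce components with respect to $p_{1}$. $\Phi$ preserves product $ab+ba^{*}$ (resp. $ab-ba^{*}$) if $\Phi(ab+ba^{*})=\Phi(a)\Phi(b)+\Phi(b)\Phi(a)^{*}$ (resp. $\Phi(ab-ba^{*})=\Phi(a)\Phi(b)-\Phi(b)\Phi(a)^{*}$) for all $a,b\in\mathcal{A}$. *)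

theory Defs
  imports "HOL-Analysis.Analysis"
begin

class complex_vector = real_vector +
  fixes scaleC :: "complex \<Rightarrow> 'a \<Rightarrow> 'a" (infixr \<open>*\<^sub>C\<close> 75)
  assumes scaleC_add_right: "c *\<^sub>C (x + y) = c *\<^sub>C x + c *\<^sub>C y"
    and scaleC_add_left: "(b + c) *\<^sub>C x = b *\<^sub>C x + c *\<^sub>C x"
    and scaleC_scaleC: "b *\<^sub>C (c *\<^sub>C x) = (b * c) *\<^sub>C x"
    and scaleC_one: "1 *\<^sub>C x = x"
    and scaleR_scaleC: "r *\<^sub>R x = (complex_of_real r) *\<^sub>C x"

class complex_normed_vector = complex_vector + real_normed_vector +
  assumes norm_scaleC: "norm (c *\<^sub>C x) = cmod c * norm x"

text \<open>An algebra structure on a complex vector space is given explicitly by a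
(not necessarily associative) multiplication mul and an involution star.\<close>

definition complex_bilinear :: "('a::complex_vector \<Rightarrow> 'a \<Rightarrow> 'a) \<Rightarrow> bool" where
  "complex_bilinear mul \<longleftrightarrow>
     (\<forall>x y z. mul (x + y) z = mul x z + mul y z) \<and>
     (\<forall>x y z. mul x (y + z) = mul x y + mul x z) \<and>
     (\<forall>c x y. mul (c *\<^sub>C x) y = c *\<^sub>C mul x y) \<and>
     (\<forall>c x y. mul x (c *\<^sub>C y) = c *\<^sub>C mul x y)"

definition alternative_law :: "('a \<Rightarrow> 'a \<Rightarrow> 'a) \<Rightarrow> bool" where
  "alternative_law mul \<longleftrightarrow>
     (\<forall>a b. mul (mul a a) b = mul a (mul a b)) \<and>
     (\<forall>a b. mul (mul b a) a = mul b (mul a a))"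

definition star_involution ::
  "('a::complex_vector \<Rightarrow> 'a \<Rightarrow> 'a) \<Rightarrow> ('a \<Rightarrow> 'a) \<Rightarrow> bool" where
  "star_involution mul star \<longleftrightarrow>
     (\<forall>x. star (star x) = x) \<and>
     (\<forall>x y. star (x + y) = star x + star y) \<and>
     (\<forall>c x. star (c *\<^sub>C x) = cnj c *\<^sub>C star x) \<and>
     (\<forall>x y. star (mul x y) = mul (star y) (star x))"

definition alt_star_algebra ::
  "('a::complex_vector \<Rightarrow> 'a \<Rightarrow> 'a) \<Rightarrow> ('a \<Rightarrow> 'a) \<Rightarrow> bool" where
  "alt_star_algebra mul star \<longleftrightarrow>
     complex_bilinear mul \<and> alternative_law mul \<and> star_involution mul star"

definition alt_C_star_algebra ::
  "('a::{complex_normed_vector,banach} \<Rightarrow> 'a \<Rightarrow> 'a) \<Rightarrow> ('a \<Rightarrow> 'a) \<Rightarrow> bool" where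
  "alt_C_star_algebra mul star \<longleftrightarrow>
     alt_star_algebra mul star \<and>
     (\<forall>x y. norm (mul x y) \<le> norm x * norm y) \<and>
     (\<forall>a. norm (mul (star a) a) = (norm a)\<^sup>2)"

definition alg_ideal :: "('a::complex_vector \<Rightarrow> 'a \<Rightarrow> 'a) \<Rightarrow> 'a set \<Rightarrow> bool" where
  "alg_ideal mul I \<longleftrightarrow>
     0 \<in> I \<and> (\<forall>x\<in>I. \<forall>y\<in>I. x + y \<in> I) \<and> (\<forall>c. \<forall>x\<in>I. c *\<^sub>C x \<in> I) \<and>
     (\<forall>x\<in>I. \<forall>a. mul a x \<in> I \<and> mul x a \<in> I)"

definition prime_algebra :: "('a::complex_vector \<Rightarrow> 'a \<Rightarrow> 'a) \<Rightarrow> bool" where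
  "prime_algebra mul \<longleftrightarrow>
     (\<forall>I J. alg_ideal mul I \<and> alg_ideal mul J \<and> (\<forall>x\<in>I. \<forall>y\<in>J. mul x y = 0)
        \<longrightarrow> I = {0} \<or> J = {0})"

definition bounded_complex_functional :: "('a::complex_normed_vector \<Rightarrow> complex) \<Rightarrow> bool" where
  "bounded_complex_functional f \<longleftrightarrow>
     (\<forall>x y. f (x + y) = f x + f y) \<and> (\<forall>c x. f (c *\<^sub>C x) = c * f x) \<and>
     (\<exists>K. \<forall>x. cmod (f x) \<le> K * norm x)"

text \<open>Any predual can be viewed
(via the canonical embedding) as a norm-closed complex subspace F of the dual of A;
A is then a dual space iff evaluation a \<mapsto> (f \<mapsto> f a) is an isometric
isomorphism of A onto the space of bounded complex-linear functionals on F.\<close>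
definition dual_banach_space :: "'a::{complex_normed_vector,banach} itself \<Rightarrow> bool" where
  "dual_banach_space _ \<longleftrightarrow>
     (\<exists>F :: ('a \<Rightarrow> complex) set.
        (\<forall>f\<in>F. bounded_complex_functional f) \<and>
        (\<lambda>_. 0) \<in> F \<and>
        (\<forall>f\<in>F. \<forall>g\<in>F. (\<lambda>x. f x + g x) \<in> F) \<and>
        (\<forall>c. \<forall>f\<in>F. (\<lambda>x. c * f x) \<in> F) \<and>
        (\<forall>h g. (\<forall>n. h n \<in> F) \<and> bounded_complex_functional g \<and>
               (\<lambda>n. onorm (\<lambda>x. h n x - g x)) \<longlonglongrightarrow> 0 \<longrightarrow> g \<in> F) \<and>
        (\<forall>a::'a. norm a = Sup {cmod (f a) | f. f \<in> F \<and> onorm f \<le> 1}) \<and>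
        (\<forall>\<phi> :: ('a \<Rightarrow> complex) \<Rightarrow> complex.
           (\<forall>f\<in>F. \<forall>g\<in>F. \<phi> (\<lambda>x. f x + g x) = \<phi> f + \<phi> g) \<and>
           (\<forall>c. \<forall>f\<in>F. \<phi> (\<lambda>x. c * f x) = c * \<phi> f) \<and>
           (\<exists>K. \<forall>f\<in>F. cmod (\<phi> f) \<le> K * onorm f)
           \<longrightarrow> (\<exists>a::'a. \<forall>f\<in>F. \<phi> f = f a)))"

definition alt_W_star_factor ::
  "('a::{complex_normed_vector,banach} \<Rightarrow> 'a \<Rightarrow> 'a) \<Rightarrow> ('a \<Rightarrow> 'a) \<Rightarrow> bool" where
  "alt_W_star_factor mul star \<longleftrightarrow>
     alt_C_star_algebra mul star \<and> prime_algebra mul \<and> dual_banach_space TYPE('a)"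

definition is_unit :: "('a \<Rightarrow> 'a \<Rightarrow> 'a) \<Rightarrow> 'a \<Rightarrow> bool" where
  "is_unit mul u \<longleftrightarrow> (\<forall>x. mul u x = x \<and> mul x u = x)"

definition projection :: "('a::zero \<Rightarrow> 'a \<Rightarrow> 'a) \<Rightarrow> ('a \<Rightarrow> 'a) \<Rightarrow> 'a \<Rightarrow> bool" where
  "projection mul star p \<longleftrightarrow> p \<noteq> 0 \<and> star p = p \<and> mul p p = p"

definition peirce :: "('a \<Rightarrow> 'a \<Rightarrow> 'a) \<Rightarrow> 'a \<Rightarrow> 'a \<Rightarrow> 'a set" where
  "peirce mul p q = {mul (mul p a) q | a. True}"

definition preserves_plus ::
  "('a::plus \<Rightarrow> 'a \<Rightarrow> 'a) \<Rightarrow> ('a \<Rightarrow> 'a) \<Rightarrow> ('b::plus \<Rightarrow> 'b \<Rightarrow> 'b) \<Rightarrow> ('b \<Rightarrow> 'b)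
   \<Rightarrow> ('a \<Rightarrow> 'b) \<Rightarrow> bool" where
  "preserves_plus mulA starA mulB starB \<Phi> \<longleftrightarrow>
     (\<forall>a b. \<Phi> (mulA a b + mulA b (starA a)) = mulB (\<Phi> a) (\<Phi> b) + mulB (\<Phi> b) (starB (\<Phi> a)))"

definition preserves_minus ::
  "('a::minus \<Rightarrow> 'a \<Rightarrow> 'a) \<Rightarrow> ('a \<Rightarrow> 'a) \<Rightarrow> ('b::minus \<Rightarrow> 'b \<Rightarrow> 'b) \<Rightarrow> ('b \<Rightarrow> 'b)
   \<Rightarrow> ('a \<Rightarrow> 'b) \<Rightarrow> bool" where
  "preserves_minus mulA starA mulB starB \<Phi> \<longleftrightarrow>
     (\<forall>a b. \<Phi> (mulA a b - mulA b (starA a)) = mulB (\<Phi> a) (\<Phi> b) - mulB (\<Phi> b) (starB (\<Phi> a)))"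

end

theory Submission
  imports Defs
begin

text \<open>Let e be the projection, f = 1 - e, and let a \<diamond> b = a b + \<sigma> b (star a) with \<sigma> = \<plusminus>1 be
  the product preserved by \<Phi>. Choose \<kappa> with \<sigma> cnj \<kappa> = \<kappa>; then (\<kappa> q) \<diamond> x = \<kappa> (q x + x q) for
  self-adjoint q. Hence if \<Phi> t = \<Phi> a + \<Phi> b, applying \<Phi>((\<kappa> q) \<diamond> _) and injectivity gives
  q (t - a - b) + (t - a - b) q = 0, as soon as additivity is known for the two elements
  \<kappa> (q a + a q) and \<kappa> (q b + b q). With q among e, f and e - f, and with the products t \<diamond> e,
  t \<diamond> f in the off-diagonal case, this makes \<Phi> additive across distinct Peirce components,
  so \<Phi> is additive on Peirce decompositions.

  Additivity on A12 follows by evaluating \<Phi>((e + a) \<diamond> (f + b)) in two ways. For a, b \<in> A11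
  and \<Phi> t = \<Phi> a + \<Phi> b the Jordan product with f shows t \<in> A11, and comparing
  \<Phi>(t \<diamond> c) = \<Phi>(t c) for c \<in> A12 gives (t - a - b) c = 0 for all c \<in> A12. In a prime
  algebra this forces t = a + b: the left annihilator of the ideal of elements whose
  11-component lies in the span of A12 A21 is an ideal, and the latter ideal contains f \<noteq> 0.
  The case of p2 is the case of p1 with the roles of the projections exchanged.\<close>

lemma scaleC_zero_right [simp]: "c *\<^sub>C (0::'a::complex_vector) = 0"
  by (metis add_cancel_right_right scaleC_add_right)

lemma scaleC_minus_right [simp]: "c *\<^sub>C (- x) = - (c *\<^sub>C (x::'a::complex_vector))"
  by (metis add.right_inverse add_eq_0_iff scaleC_add_right scaleC_zero_right)

lemma scaleC_diff_right: "c *\<^sub>C (x - y) = c *\<^sub>C x - c *\<^sub>C (y::'a::complex_vector)"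
  by (metis diff_conv_add_uminus scaleC_add_right scaleC_minus_right)

lemma scaleC_minus_one [simp]: "(-1::complex) *\<^sub>C x = - (x::'a::complex_vector)"
  by (metis of_real_1 of_real_minus scaleR_minus1_left scaleR_scaleC)

lemma scaleC_left_imp_eq:
  assumes "c \<noteq> 0" "c *\<^sub>C x = c *\<^sub>C (y::'a::complex_vector)" shows "x = y"
  by (metis assms field_class.field_inverse scaleC_one scaleC_scaleC)

lemma scaleR_scaleC_commute: "r *\<^sub>R (c *\<^sub>C x) = c *\<^sub>C (r *\<^sub>R (x::'a::complex_vector))"
  by (simp add: scaleR_scaleC scaleC_scaleC mult.commute)

lemma double_eq_double_iff: "x + x = y + y \<longleftrightarrow> (x::'a::real_vector) = y"
  by (metis scaleR_2 scaleR_cancel_left zero_neq_numeral)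

lemma double_eq_zero_iff: "x + x = 0 \<longleftrightarrow> (x::'a::real_vector) = 0"
  by (metis scaleR_2 scaleR_eq_0_iff zero_neq_numeral)

section \<open>Alternative *-algebras\<close>

locale alt_star_alg =
  fixes mul :: "'a::complex_vector \<Rightarrow> 'a \<Rightarrow> 'a" and star :: "'a \<Rightarrow> 'a"
  assumes alt_star_algebra: "alt_star_algebra mul star"
begin

lemma mul_add_left: "mul (x + y) z = mul x z + mul y z"
  and mul_add_right: "mul x (y + z) = mul x y + mul x z"
  and mul_scaleC_left: "mul (c *\<^sub>C x) y = c *\<^sub>C mul x y"
  and mul_scaleC_right: "mul x (c *\<^sub>C y) = c *\<^sub>C mul x y"
  using alt_star_algebra unfolding alt_star_algebra_def complex_bilinear_def by blast+

lemma mul_zero_left [simp]: "mul 0 x = 0"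
  by (metis add_cancel_left_left mul_add_left)

lemma mul_zero_right [simp]: "mul x 0 = 0"
  by (metis add_cancel_left_left mul_add_right)

lemma mul_minus_left: "mul (- x) y = - mul x y"
  by (metis add_eq_0_iff mul_add_left mul_zero_left add.right_inverse)

lemma mul_minus_right: "mul x (- y) = - mul x y"
  by (metis add_eq_0_iff mul_add_right mul_zero_right add.right_inverse)

lemma mul_diff_left: "mul (x - y) z = mul x z - mul y z"
  by (metis diff_conv_add_uminus mul_add_left mul_minus_left)

lemma mul_diff_right: "mul x (y - z) = mul x y - mul x z"
  by (metis diff_conv_add_uminus mul_add_right mul_minus_right)

lemma mul_scaleR_left: "mul (r *\<^sub>R x) y = r *\<^sub>R mul x y"
  by (simp add: scaleR_scaleC mul_scaleC_left)

lemma mul_scaleR_right: "mul x (r *\<^sub>R y) = r *\<^sub>R mul x y"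
  by (simp add: scaleR_scaleC mul_scaleC_right)

lemmas mul_linear = mul_add_left mul_add_right mul_scaleC_left mul_scaleC_right
  mul_minus_left mul_minus_right mul_diff_left mul_diff_right mul_scaleR_left mul_scaleR_right

lemma alternative_left: "mul (mul a a) b = mul a (mul a b)"
  and alternative_right: "mul (mul b a) a = mul b (mul a a)"
  using alt_star_algebra unfolding alt_star_algebra_def alternative_law_def by blast+

lemma star_star [simp]: "star (star x) = x"
  and star_add: "star (x + y) = star x + star y"
  and star_scaleC: "star (c *\<^sub>C x) = cnj c *\<^sub>C star x"
  and star_mul: "star (mul x y) = mul (star y) (star x)"
  using alt_star_algebra unfolding alt_star_algebra_def star_involution_def by blast+

lemma star_zero [simp]: "star 0 = 0"
  by (metis add_cancel_left_left star_add)

lemma star_minus: "star (- x) = - star x"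
  by (metis add_eq_0_iff star_add star_zero add.right_inverse)

lemma star_diff: "star (x - y) = star x - star y"
  by (metis diff_conv_add_uminus star_add star_minus)

lemma star_scaleR: "star (r *\<^sub>R x) = r *\<^sub>R star x"
  by (simp add: scaleR_scaleC star_scaleC)

definition assoc :: "'a \<Rightarrow> 'a \<Rightarrow> 'a \<Rightarrow> 'a" where
  "assoc x y z = mul (mul x y) z - mul x (mul y z)"

lemma assoc_swap_left: "assoc y x z = - assoc x y z"
proof -
  have "mul (mul (x + y) (x + y)) z = mul (x + y) (mul (x + y) z)" by (rule alternative_left)
  then have "mul (mul x y) z + mul (mul y x) z = mul x (mul y z) + mul y (mul x z)"
    by (simp add: mul_linear alternative_left algebra_simps)
  then show ?thesis unfolding assoc_def by (simp add: algebra_simps)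
qed

lemma assoc_swap_right: "assoc x z y = - assoc x y z"
proof -
  have "mul (mul x (y + z)) (y + z) = mul x (mul (y + z) (y + z))" by (rule alternative_right)
  then have "mul (mul x y) z + mul (mul x z) y = mul x (mul y z) + mul x (mul z y)"
    by (simp add: mul_linear alternative_right algebra_simps)
  then show ?thesis unfolding assoc_def by (simp add: algebra_simps)
qed

definition jordan :: "'a \<Rightarrow> 'a \<Rightarrow> 'a" where "jordan q z = mul q z + mul z q"

lemma jordan_diff_right: "jordan q (x - y) = jordan q x - jordan q y"
  unfolding jordan_def by (simp add: mul_linear)

lemma alg_ideal_left_annihilator:
  assumes "alg_ideal mul I"
  shows "alg_ideal mul {w. \<forall>z\<in>I. mul w z = 0}"
proof -
  have closed: "mul (mul a w) z = 0 \<and> mul (mul w a) z = 0"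
    if w: "\<forall>z\<in>I. mul w z = 0" and z: "z \<in> I" for a w z
  proof -
    have "mul z a \<in> I" "mul a z \<in> I" using assms z unfolding alg_ideal_def by auto
    then have wz: "mul w z = 0" "mul w (mul z a) = 0" "mul w (mul a z) = 0" using w z by auto
    then have "assoc w a z = 0"
      using assoc_swap_right[of w z a] unfolding assoc_def by simp
    then have "assoc a w z = 0" "assoc w a z = 0" using assoc_swap_left[of w a z] by simp_all
    then show ?thesis using wz unfolding assoc_def by simp
  qed
  show ?thesis
    unfolding alg_ideal_def using closed by (auto simp: mul_linear)
qed

lemma prime_left_annihilator_eq_zero:
  assumes "prime_algebra mul" "alg_ideal mul I" "I \<noteq> {0}" "\<forall>z\<in>I. mul w z = 0"
  shows "w = 0"
proof -
  let ?M = "{w. \<forall>z\<in>I. mul w z = 0}"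
  have "?M = {0} \<or> I = {0}"
    using assms(1,2) alg_ideal_left_annihilator[OF assms(2)] unfolding prime_algebra_def by blast
  then show ?thesis using assms(3,4) by blast
qed

end

section \<open>Peirce decomposition\<close>

locale alt_star_peirce = alt_star_alg +
  fixes one e :: 'a
  assumes unit: "is_unit mul one"
    and projection: "projection mul star e"
    and proper: "e \<noteq> one"
begin

lemma one_mul [simp]: "mul one x = x" and mul_one [simp]: "mul x one = x"
  using unit unfolding is_unit_def by blast+

lemma star_one [simp]: "star one = one"
  by (metis mul_one star_mul star_star)

lemma star_e [simp]: "star e = e" and e_idem [simp]: "mul e e = e"
  using projection unfolding projection_def by blast+

lemma e_mul_e_mul: "mul e (mul e x) = mul e x"
  by (metis alternative_left e_idem)

lemma mul_e_mul_e: "mul (mul x e) e = mul x e"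
  by (metis alternative_right e_idem)

lemma e_flexible: "mul e (mul x e) = mul (mul e x) e"
  using assoc_swap_right[of e x e] unfolding assoc_def by (simp add: e_mul_e_mul)

definition f :: 'a where "f = one - e"

lemma mul_f_left: "mul f x = x - mul e x"
  and mul_f_right: "mul x f = x - mul x e"
  unfolding f_def by (simp_all add: mul_linear)

lemma star_f [simp]: "star f = f"
  unfolding f_def by (simp add: star_diff)

text \<open>For a, b \<in> {0, 1}, eig x a b encodes membership in the Peirce spaces of the paper:
  eig x 1 1, eig x 1 0, eig x 0 1 and eig x 0 0 say x \<in> A11, A12, A21 and A22.\<close>

definition eig :: "'a \<Rightarrow> real \<Rightarrow> real \<Rightarrow> bool" where
  "eig x a b \<longleftrightarrow> mul e x = a *\<^sub>R x \<and> mul x e = b *\<^sub>R x"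

lemma eig_zero [simp]: "eig 0 a b"
  unfolding eig_def by simp

lemma eig_add: "eig x a b \<Longrightarrow> eig y a b \<Longrightarrow> eig (x + y) a b"
  and eig_diff: "eig x a b \<Longrightarrow> eig y a b \<Longrightarrow> eig (x - y) a b"
  and eig_scaleC: "eig x a b \<Longrightarrow> eig (c *\<^sub>C x) a b"
  and eig_scaleR: "eig x a b \<Longrightarrow> eig (r *\<^sub>R x) a b"
  and eig_minus: "eig x a b \<Longrightarrow> eig (- x) a b"
  unfolding eig_def by (simp_all add: mul_linear scaleR_add_right scaleR_diff_right scaleR_scaleC_commute)

lemma eig_star: "eig x a b \<Longrightarrow> eig (star x) b a"
  unfolding eig_def by (metis star_e star_mul star_scaleR)

lemma eig_zero_if_left:
  assumes "mul e z = r *\<^sub>R z" "r \<noteq> 0" "r \<noteq> 1" shows "z = 0"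
proof -
  have "r *\<^sub>R (r *\<^sub>R z) = r *\<^sub>R z"
    using e_mul_e_mul[of z] by (simp add: assms(1) mul_scaleR_right)
  then have "(r * r - r) *\<^sub>R z = 0" by (simp add: algebra_simps)
  moreover have "r * r - r \<noteq> 0" using assms(2,3) by simp
  ultimately show ?thesis by simp
qed

lemma eig_zero_if_right:
  assumes "mul z e = r *\<^sub>R z" "r \<noteq> 0" "r \<noteq> 1" shows "z = 0"
proof -
  have "r *\<^sub>R (r *\<^sub>R z) = r *\<^sub>R z"
    using mul_e_mul_e[of z] by (simp add: assms(1) mul_scaleR_left)
  then have "(r * r - r) *\<^sub>R z = 0" by (simp add: algebra_simps)
  moreover have "r * r - r \<noteq> 0" using assms(2,3) by simp
  ultimately show ?thesis by simp
qed

lemma eig_mul_eigenvalues: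
  assumes "eig x a b" "eig y c d"
  shows "mul e (mul x y) = (a + b - c) *\<^sub>R mul x y"
    and "mul (mul x y) e = (d - b + c) *\<^sub>R mul x y"
proof -
  have h: "mul e x = a *\<^sub>R x" "mul x e = b *\<^sub>R x" "mul e y = c *\<^sub>R y" "mul y e = d *\<^sub>R y"
    using assms unfolding eig_def by auto
  have "mul e (mul x y) = mul (mul e x) y + mul (mul x e) y - mul x (mul e y)"
    using assoc_swap_left[of x e y] unfolding assoc_def by (simp add: algebra_simps)
  then show "mul e (mul x y) = (a + b - c) *\<^sub>R mul x y"
    unfolding h by (simp add: mul_scaleR_left mul_scaleR_right algebra_simps)
  have "mul (mul x y) e = mul x (mul y e) - mul (mul x e) y + mul x (mul e y)"
    using assoc_swap_right[of x y e] unfolding assoc_def by (simp add: algebra_simps)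
  then show "mul (mul x y) e = (d - b + c) *\<^sub>R mul x y"
    unfolding h by (simp add: mul_scaleR_left mul_scaleR_right algebra_simps)
qed

lemma eig_mul:
  assumes "eig x a b" "eig y c d"
  shows "if a + b - c \<in> {0, 1} \<and> d - b + c \<in> {0, 1}
         then eig (mul x y) (a + b - c) (d - b + c) else mul x y = 0"
proof (cases "a + b - c \<in> {0, 1} \<and> d - b + c \<in> {0, 1}")
  case True
  then show ?thesis using eig_mul_eigenvalues[OF assms] unfolding eig_def by simp
next
  case False
  then have "mul x y = 0"
    using eig_zero_if_left[OF eig_mul_eigenvalues(1)[OF assms]]
      eig_zero_if_right[OF eig_mul_eigenvalues(2)[OF assms]] by blast
  then show ?thesis using False by simp
qed

lemma eig_mul_eq_zero:
  "eig x 1 1 \<Longrightarrow> eig y 0 1 \<Longrightarrow> mul x y = 0"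
  "eig x 1 1 \<Longrightarrow> eig y 0 0 \<Longrightarrow> mul x y = 0"
  "eig x 1 0 \<Longrightarrow> eig y 1 1 \<Longrightarrow> mul x y = 0"
  "eig x 0 1 \<Longrightarrow> eig y 0 0 \<Longrightarrow> mul x y = 0"
  "eig x 0 0 \<Longrightarrow> eig y 1 1 \<Longrightarrow> mul x y = 0"
  "eig x 0 0 \<Longrightarrow> eig y 1 0 \<Longrightarrow> mul x y = 0"
  by (drule (1) eig_mul, simp)+

lemma eig_mul_12_21: "eig x 1 0 \<Longrightarrow> eig y 0 1 \<Longrightarrow> eig (mul x y) 1 1"
  and eig_mul_11_12: "eig x 1 1 \<Longrightarrow> eig y 1 0 \<Longrightarrow> eig (mul x y) 1 0"
  and eig_mul_21_11: "eig x 0 1 \<Longrightarrow> eig y 1 1 \<Longrightarrow> eig (mul x y) 0 1"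
  and eig_mul_12_12: "eig x 1 0 \<Longrightarrow> eig y 1 0 \<Longrightarrow> eig (mul x y) 0 1"
  by (drule (1) eig_mul, simp)+

definition P11 :: "'a \<Rightarrow> 'a" where "P11 x = mul (mul e x) e"
definition P12 :: "'a \<Rightarrow> 'a" where "P12 x = mul e x - P11 x"
definition P21 :: "'a \<Rightarrow> 'a" where "P21 x = mul x e - P11 x"
definition P22 :: "'a \<Rightarrow> 'a" where "P22 x = x - mul e x - mul x e + P11 x"

lemma peirce_decomposition: "x = P11 x + P12 x + P21 x + P22 x"
  unfolding P12_def P21_def P22_def by (simp add: algebra_simps)

lemma eig_P11: "eig (P11 x) 1 1"
  and eig_P12: "eig (P12 x) 1 0"
  and eig_P21: "eig (P21 x) 0 1"
  and eig_P22: "eig (P22 x) 0 0"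
  unfolding eig_def P12_def P21_def P22_def P11_def
  by (simp_all add: mul_linear e_mul_e_mul mul_e_mul_e e_flexible)

lemma peirce_components_unique:
  assumes "eig w11 1 1" "eig w12 1 0" "eig w21 0 1" "eig w22 0 0"
    and "x = w11 + w12 + w21 + w22"
  shows "P11 x = w11" "P12 x = w12" "P21 x = w21" "P22 x = w22"
proof -
  have ex: "mul e x = w11 + w12" and xe: "mul x e = w11 + w21"
    using assms unfolding eig_def by (simp_all add: mul_linear)
  show P11: "P11 x = w11" unfolding P11_def ex using assms unfolding eig_def by (simp add: mul_linear)
  show "P12 x = w12" "P21 x = w21" "P22 x = w22"
    using P11 ex xe assms(5) unfolding P12_def P21_def P22_def by (simp_all add: algebra_simps)
qed

lemma peirce_components_eq_zero:
  assumes "eig w11 1 1" "eig w12 1 0" "eig w21 0 1" "eig w22 0 0"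
    and "w11 + w12 + w21 + w22 = 0"
  shows "w11 = 0" "w12 = 0" "w21 = 0" "w22 = 0"
  using peirce_components_unique[OF assms(1-4) assms(5)[symmetric]]
    peirce_components_unique[OF eig_zero eig_zero eig_zero eig_zero, of 0]
  by simp_all

lemma P11_zero [simp]: "P11 0 = 0"
  and P11_add: "P11 (x + y) = P11 x + P11 y"
  and P11_scaleC: "P11 (c *\<^sub>C x) = c *\<^sub>C P11 x"
  unfolding P11_def by (simp_all add: mul_linear)

lemma P11_mul_eig:
  "eig x a b \<Longrightarrow> eig y c d \<Longrightarrow> P11 (mul x y) = ((a + b - c) * (d - b + c)) *\<^sub>R mul x y"
  unfolding P11_def using eig_mul_eigenvalues by (simp add: mul_scaleR_left)

lemma P11_mul: "P11 (mul x y) = mul (P11 x) (P11 y) + mul (P12 x) (P21 y)"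
proof -
  note eigs = eig_P11[of x] eig_P12[of x] eig_P21[of x] eig_P22[of x]
    eig_P11[of y] eig_P12[of y] eig_P21[of y] eig_P22[of y]
  have "P11 (mul x y) = P11 (mul (P11 x + P12 x + P21 x + P22 x) (P11 y + P12 y + P21 y + P22 y))"
    using peirce_decomposition by metis
  also have "\<dots> = mul (P11 x) (P11 y) + mul (P12 x) (P21 y)"
    using eigs by (simp add: mul_add_left mul_add_right P11_add P11_mul_eig eig_mul_eq_zero)
  finally show ?thesis .
qed

section \<open>Primeness and the corner A11\<close>

inductive_set span_12_21 :: "'a set" where
  span_12_21_zero: "0 \<in> span_12_21"
| span_12_21_mul: "eig c 1 0 \<Longrightarrow> eig d 0 1 \<Longrightarrow> mul c d \<in> span_12_21"
| span_12_21_add: "u \<in> span_12_21 \<Longrightarrow> v \<in> span_12_21 \<Longrightarrow> u + v \<in> span_12_21"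
| span_12_21_scaleC: "u \<in> span_12_21 \<Longrightarrow> k *\<^sub>C u \<in> span_12_21"

lemma mul_11_12_21_assoc:
  assumes "eig y 1 1" "eig c 1 0" "eig d 0 1"
  shows "mul y (mul c d) = mul (mul y c) d" "mul (mul c d) y = mul c (mul d y)"
proof -
  have "mul c y = 0" "mul y d = 0" using assms by (simp_all add: eig_mul_eq_zero)
  then have "assoc c y d = 0" unfolding assoc_def by simp
  then have "assoc y c d = 0" "assoc c d y = 0"
    using assoc_swap_left[of c y d] assoc_swap_right[of c y d] by simp_all
  then show "mul y (mul c d) = mul (mul y c) d" "mul (mul c d) y = mul c (mul d y)"
    unfolding assoc_def by simp_all
qed

lemma span_12_21_mul_11:
  "u \<in> span_12_21 \<Longrightarrow> eig y 1 1 \<Longrightarrow> mul y u \<in> span_12_21 \<and> mul u y \<in> span_12_21"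
proof (induction rule: span_12_21.induct)
  case (span_12_21_mul c d)
  then show ?case
    using mul_11_12_21_assoc[OF span_12_21_mul(3,1,2)]
    by (metis span_12_21.span_12_21_mul eig_mul_11_12 eig_mul_21_11)
qed (auto simp: mul_linear intro: span_12_21.intros)

lemma span_12_21_annihilated:
  assumes x: "eig x 1 1" and ann: "\<forall>c. eig c 1 0 \<longrightarrow> mul x c = 0"
  shows "u \<in> span_12_21 \<Longrightarrow> mul x u = 0"
proof (induction rule: span_12_21.induct)
  case (span_12_21_mul c d)
  then show ?case using mul_11_12_21_assoc[OF x span_12_21_mul] ann by simp
qed (simp_all add: mul_linear)

definition ideal_12_21 :: "'a set" where "ideal_12_21 = {z. P11 z \<in> span_12_21}"

lemma alg_ideal_12_21: "alg_ideal mul ideal_12_21"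
proof -
  have "P11 (mul a z) \<in> span_12_21 \<and> P11 (mul z a) \<in> span_12_21"
    if z: "P11 z \<in> span_12_21" for a z
  proof -
    have "mul (P11 a) (P11 z) \<in> span_12_21" "mul (P11 z) (P11 a) \<in> span_12_21"
      using span_12_21_mul_11[OF z eig_P11] by auto
    moreover have "mul (P12 a) (P21 z) \<in> span_12_21" "mul (P12 z) (P21 a) \<in> span_12_21"
      using eig_P12 eig_P21 by (auto intro: span_12_21_mul)
    ultimately show ?thesis unfolding P11_mul by (auto intro: span_12_21_add)
  qed
  then show ?thesis
    unfolding alg_ideal_def ideal_12_21_def
    by (auto simp: P11_add P11_scaleC intro: span_12_21.intros)
qed

lemma f_in_ideal_12_21: "f \<in> ideal_12_21"
  unfolding ideal_12_21_def P11_def by (simp add: mul_f_left mul_f_right mul_linear span_12_21_zero)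

lemma f_neq_zero: "f \<noteq> 0"
  unfolding f_def using proper by simp

lemma eig_11_eq_zero_if_annihilates_12:
  assumes "prime_algebra mul" and x: "eig x 1 1" and ann: "\<forall>c. eig c 1 0 \<longrightarrow> mul x c = 0"
  shows "x = 0"
proof (rule prime_left_annihilator_eq_zero[OF assms(1) alg_ideal_12_21])
  show "ideal_12_21 \<noteq> {0}" using f_in_ideal_12_21 f_neq_zero by blast
  show "\<forall>z\<in>ideal_12_21. mul x z = 0"
  proof
    fix z assume "z \<in> ideal_12_21"
    then have "mul x (P11 z) = 0"
      using span_12_21_annihilated[OF x ann] unfolding ideal_12_21_def by simp
    moreover have "mul x (P12 z) = 0" using ann eig_P12 by blast
    moreover have "mul x (P21 z) = 0" "mul x (P22 z) = 0"
      using x eig_P21 eig_P22 by (simp_all add: eig_mul_eq_zero)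
    ultimately show "mul x z = 0"
      by (subst peirce_decomposition) (simp add: mul_add_right)
  qed
qed

lemma star_e_minus_f [simp]: "star (e - f) = e - f"
  by (simp add: star_diff)

lemma jordan_e_eig: "eig x a b \<Longrightarrow> jordan e x = (a + b) *\<^sub>R x"
  unfolding jordan_def eig_def by (simp add: scaleR_add_left)

lemma jordan_f: "jordan f z = (z + z) - jordan e z"
  unfolding jordan_def by (simp add: mul_f_left mul_f_right algebra_simps)

lemma jordan_e_minus_f: "jordan (e - f) z = jordan e z + jordan e z - (z + z)"
  unfolding jordan_def by (simp add: mul_linear mul_f_left mul_f_right algebra_simps)

lemma jordan_e_peirce: "jordan e x = (2::real) *\<^sub>R P11 x + P12 x + P21 x"
proof -
  have "jordan e x = jordan e (P11 x) + jordan e (P12 x) + jordan e (P21 x) + jordan e (P22 x)"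
    by (subst peirce_decomposition) (simp add: jordan_def mul_linear algebra_simps)
  then show ?thesis
    by (simp add: jordan_e_eig[OF eig_P11] jordan_e_eig[OF eig_P12] jordan_e_eig[OF eig_P21]
        jordan_e_eig[OF eig_P22])
qed

lemma jordan_e_minus_f_peirce: "jordan (e - f) x = (2::real) *\<^sub>R (P11 x - P22 x)"
  unfolding jordan_e_minus_f jordan_e_peirce
  by (subst (5 6) peirce_decomposition) (simp add: scaleR_2 algebra_simps)

lemma eig_jordan_e_minus_f: "eig x a b \<Longrightarrow> eig (jordan (e - f) x) a b"
  unfolding jordan_e_minus_f by (simp add: jordan_e_eig eig_add eig_diff eig_scaleR)

lemma eig_11_if_jordan_e:
  assumes "jordan e t = t + t" shows "eig t 1 1"
proof -
  have sum: "0 + P12 t + P21 t + (2::real) *\<^sub>R P22 t = 0"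
    using assms unfolding jordan_e_peirce
    by (subst (asm) (3 4) peirce_decomposition) (simp add: scaleR_2 algebra_simps)
  then have "P12 t = 0" "P21 t = 0" "P22 t = 0"
    using peirce_components_eq_zero[OF eig_zero eig_P12 eig_P21 eig_scaleR[OF eig_P22] sum]
    by simp_all
  then have "t = P11 t" using peirce_decomposition[of t] by simp
  then show ?thesis using eig_P11 by metis
qed

lemma eq_zero_if_jordan_e_eq_and_skew:
  assumes "jordan e D = D"
    and "mul D e + s *\<^sub>C star (mul D e) = 0"
    and "mul D f + s *\<^sub>C star (mul D f) = 0"
  shows "D = 0"
proof -
  have sum: "P11 D + 0 + 0 + (-1::real) *\<^sub>R P22 D = 0"
    using assms(1) unfolding jordan_e_peirce
    by (subst (asm) (4) peirce_decomposition) (simp add: scaleR_2 algebra_simps)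
  then have "P11 D = 0" "P22 D = 0"
    using peirce_components_eq_zero[OF eig_P11 eig_zero eig_zero eig_scaleR[OF eig_P22] sum]
    by simp_all
  then have D: "D = P12 D + P21 D" using peirce_decomposition[of D] by simp
  have De: "mul D e = P21 D" and Df: "mul D f = P12 D"
    using eig_P12[of D] eig_P21[of D] unfolding eig_def
    by (subst D, simp add: mul_linear mul_f_right)+
  have sum21: "0 + s *\<^sub>C star (P21 D) + P21 D + 0 = 0"
    using assms(2) unfolding De by (simp add: algebra_simps)
  have sum12: "0 + P12 D + s *\<^sub>C star (P12 D) + 0 = 0"
    using assms(3) unfolding Df by simp
  have "P21 D = 0" "P12 D = 0"
    using peirce_components_eq_zero(3)[OF eig_zero eig_scaleC[OF eig_star[OF eig_P21]] eig_P21 eig_zero sum21]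
      peirce_components_eq_zero(2)[OF eig_zero eig_P12 eig_scaleC[OF eig_star[OF eig_P12]] eig_zero sum12]
    by simp_all
  then show ?thesis using D by simp
qed


lemma eig_e: "eig e 1 1"
  and eig_f: "eig f 0 0"
  unfolding eig_def by (simp_all add: mul_f_left mul_f_right)

lemma projection_f: "projection mul star f"
  unfolding projection_def using f_neq_zero by (simp add: mul_f_left mul_f_right)

lemma f_neq_one: "f \<noteq> one"
  unfolding f_def using projection by (auto simp: projection_def)

end

section \<open>Additivity of product preservers\<close>

locale star_product_preserver =
  alt_star_peirce mul star one e + B: alt_star_alg mulB starB
  for mul :: "'a::complex_vector \<Rightarrow> 'a \<Rightarrow> 'a" and star one e
    and mulB :: "'b::complex_vector \<Rightarrow> 'b \<Rightarrow> 'b" and starB +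
  fixes \<Phi> :: "'a \<Rightarrow> 'b" and \<sigma> :: complex
  assumes bij: "bij \<Phi>"
    and sign: "\<sigma> = 1 \<or> \<sigma> = -1"
    and preserves: "\<And>x y. \<Phi> (mul x y + \<sigma> *\<^sub>C mul y (star x))
                          = mulB (\<Phi> x) (\<Phi> y) + \<sigma> *\<^sub>C mulB (\<Phi> y) (starB (\<Phi> x))"
begin

definition diamond :: "'a \<Rightarrow> 'a \<Rightarrow> 'a" where
  "diamond x y = mul x y + \<sigma> *\<^sub>C mul y (star x)"

definition diamondB :: "'b \<Rightarrow> 'b \<Rightarrow> 'b" where
  "diamondB u v = mulB u v + \<sigma> *\<^sub>C mulB v (starB u)"

lemma Phi_diamond: "\<Phi> (diamond x y) = diamondB (\<Phi> x) (\<Phi> y)"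
  unfolding diamond_def diamondB_def by (rule preserves)

lemma diamond_add_left: "diamond (x + y) w = diamond x w + diamond y w"
  and diamond_add_right: "diamond w (x + y) = diamond w x + diamond w y"
  and diamond_diff_left: "diamond (x - y) w = diamond x w - diamond y w"
  unfolding diamond_def
  by (simp_all add: mul_linear star_add star_diff scaleC_add_right scaleC_diff_right algebra_simps)

lemma diamondB_add_left: "diamondB (u + v) w = diamondB u w + diamondB v w"
  and diamondB_add_right: "diamondB w (u + v) = diamondB w u + diamondB w v"
  and diamondB_zero_right [simp]: "diamondB w 0 = 0"
  unfolding diamondB_def
  by (simp_all add: B.mul_add_left B.mul_add_right B.star_add scaleC_add_right algebra_simps)

lemma Phi_inj: "\<Phi> x = \<Phi> y \<Longrightarrow> x = y"
  using bij by (meson bij_def injD)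

lemma Phi_surj: "\<exists>t. \<Phi> t = v"
  using bij by (metis bij_def surjD)

lemma Phi_zero [simp]: "\<Phi> 0 = 0"
proof -
  obtain z where z: "\<Phi> z = 0" using Phi_surj by blast
  have "diamond 0 z = 0" unfolding diamond_def by simp
  then show ?thesis using Phi_diamond[of 0 z] z by simp
qed

lemma Phi_additive_transfer:
  assumes "\<Phi> t = \<Phi> a + \<Phi> b"
  shows "\<Phi> (diamond y t) = \<Phi> (diamond y a) + \<Phi> (diamond y b)"
    and "\<Phi> (diamond t y) = \<Phi> (diamond a y) + \<Phi> (diamond b y)"
  using assms by (simp_all add: Phi_diamond diamondB_add_left diamondB_add_right)

definition kappa :: complex where "kappa = (if \<sigma> = 1 then 1 else \<i>)"

lemma diamond_kappa_self_adjoint: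
  assumes "star q = q" shows "diamond (kappa *\<^sub>C q) x = kappa *\<^sub>C jordan q x"
proof -
  have "\<sigma> * cnj kappa = kappa" using sign unfolding kappa_def by auto
  then show ?thesis
    unfolding diamond_def jordan_def using assms
    by (simp add: mul_linear star_scaleC scaleC_scaleC scaleC_add_right)
qed

lemma jordan_eq_zero_if_additive:
  assumes t: "\<Phi> t = \<Phi> a + \<Phi> b" and q: "star q = q"
    and additive: "\<Phi> (kappa *\<^sub>C jordan q a + kappa *\<^sub>C jordan q b)
                   = \<Phi> (kappa *\<^sub>C jordan q a) + \<Phi> (kappa *\<^sub>C jordan q b)"
  shows "jordan q (t - a - b) = 0"
proof -
  have "\<Phi> (kappa *\<^sub>C jordan q t) = \<Phi> (kappa *\<^sub>C jordan q a + kappa *\<^sub>C jordan q b)"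
    using Phi_additive_transfer(1)[OF t, of "kappa *\<^sub>C q"] additive
    unfolding diamond_kappa_self_adjoint[OF q] by simp
  then have "kappa *\<^sub>C jordan q t = kappa *\<^sub>C (jordan q a + jordan q b)"
    using Phi_inj scaleC_add_right by metis
  then have "jordan q t = jordan q a + jordan q b"
    using scaleC_left_imp_eq kappa_def by (metis zero_neq_one complex_i_not_zero)
  then show ?thesis by (simp add: jordan_diff_right)
qed

lemma jordan_eq_zero_if_one_vanishes:
  assumes "\<Phi> t = \<Phi> a + \<Phi> b" "star q = q" "jordan q a = 0 \<or> jordan q b = 0"
  shows "jordan q (t - a - b) = 0"
  using jordan_eq_zero_if_additive[OF assms(1,2)] assms(3) by auto

lemma diamond_self_adjoint_right:
  "star q = q \<Longrightarrow> diamond x q = mul x q + \<sigma> *\<^sub>C star (mul x q)"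
  unfolding diamond_def by (simp add: star_mul)

lemma Phi_addI:
  assumes "\<And>t. \<Phi> t = \<Phi> x + \<Phi> y \<Longrightarrow> t - x - y = 0"
  shows "\<Phi> (x + y) = \<Phi> x + \<Phi> y"
  using assms Phi_surj by (metis diff_diff_eq eq_iff_diff_eq_0)

lemma Phi_add_11_22:
  assumes x: "eig x 1 1" and y: "eig y 0 0"
  shows "\<Phi> (x + y) = \<Phi> x + \<Phi> y"
proof (rule Phi_addI)
  fix t assume t: "\<Phi> t = \<Phi> x + \<Phi> y"
  have "jordan e y = 0" "jordan f x = 0"
    using jordan_e_eig[OF x] jordan_e_eig[OF y] by (simp_all add: jordan_f scaleR_2)
  then have "jordan e (t - x - y) = 0" "jordan f (t - x - y) = 0"
    using jordan_eq_zero_if_one_vanishes[OF t] by simp_all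
  then show "t - x - y = 0" unfolding jordan_f by (simp add: double_eq_zero_iff)
qed

lemma Phi_add_P11_zero_11:
  assumes x: "P11 x = 0" and d: "eig d 1 1"
  shows "\<Phi> (x + d) = \<Phi> x + \<Phi> d"
proof (rule Phi_addI)
  fix t assume t: "\<Phi> t = \<Phi> x + \<Phi> d"
  have "jordan f d = 0" using jordan_e_eig[OF d] by (simp add: jordan_f scaleR_2)
  then have jordan_f_D: "jordan f (t - x - d) = 0" using jordan_eq_zero_if_one_vanishes[OF t] by simp
  have "eig (kappa *\<^sub>C jordan (e - f) x) 0 0"
    unfolding jordan_e_minus_f_peirce x using eig_P22 by (simp add: eig_scaleC eig_scaleR eig_minus)
  moreover have "eig (kappa *\<^sub>C jordan (e - f) d) 1 1"
    by (rule eig_scaleC[OF eig_jordan_e_minus_f[OF d]])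
  ultimately have "jordan (e - f) (t - x - d) = 0"
    using jordan_eq_zero_if_additive[OF t star_e_minus_f] Phi_add_11_22 by (simp add: add.commute)
  moreover have "jordan e (t - x - d) = (t - x - d) + (t - x - d)"
    using jordan_f_D unfolding jordan_f by simp
  ultimately show "t - x - d = 0" unfolding jordan_e_minus_f by (simp add: double_eq_zero_iff)
qed

lemma Phi_add_P22_zero_22:
  assumes x: "P22 x = 0" and d: "eig d 0 0"
  shows "\<Phi> (x + d) = \<Phi> x + \<Phi> d"
proof (rule Phi_addI)
  fix t assume t: "\<Phi> t = \<Phi> x + \<Phi> d"
  have "jordan e d = 0" using jordan_e_eig[OF d] by simp
  then have jordan_e_D: "jordan e (t - x - d) = 0" using jordan_eq_zero_if_one_vanishes[OF t] by simp
  have "eig (kappa *\<^sub>C jordan (e - f) x) 1 1"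
    unfolding jordan_e_minus_f_peirce x using eig_P11 by (simp add: eig_scaleC eig_scaleR)
  moreover have "eig (kappa *\<^sub>C jordan (e - f) d) 0 0"
    by (rule eig_scaleC[OF eig_jordan_e_minus_f[OF d]])
  ultimately have "jordan (e - f) (t - x - d) = 0"
    using jordan_eq_zero_if_additive[OF t star_e_minus_f] Phi_add_11_22 by simp
  then show "t - x - d = 0"
    using jordan_e_D unfolding jordan_e_minus_f by (simp add: double_eq_zero_iff)
qed

lemma Phi_add_12_21:
  assumes u: "eig u 1 0" and v: "eig v 0 1"
  shows "\<Phi> (u + v) = \<Phi> u + \<Phi> v"
proof (rule Phi_addI)
  fix t assume t: "\<Phi> t = \<Phi> u + \<Phi> v"
  let ?D = "t - u - v"
  have "jordan (e - f) u = 0" "jordan (e - f) v = 0"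
    unfolding jordan_e_minus_f using jordan_e_eig[OF u] jordan_e_eig[OF v] by simp_all
  then have "jordan (e - f) ?D = 0" using jordan_eq_zero_if_one_vanishes[OF t] by simp
  then have "jordan e ?D = ?D"
    unfolding jordan_e_minus_f by (simp add: double_eq_double_iff)
  have "diamond u e = 0" "diamond v f = 0"
    using u v unfolding eig_def by (simp_all add: diamond_self_adjoint_right mul_f_right)
  then have "diamond t e = diamond v e" "diamond t f = diamond u f"
    using Phi_additive_transfer(2)[OF t, of e] Phi_additive_transfer(2)[OF t, of f]
    by (simp_all add: Phi_inj)
  then have "diamond ?D e = 0" "diamond ?D f = 0"
    using \<open>diamond u e = 0\<close> \<open>diamond v f = 0\<close> by (simp_all add: diamond_diff_left)
  show "?D = 0"
    by (rule eq_zero_if_jordan_e_eq_and_skew[OF \<open>jordan e ?D = ?D\<close>])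
      (use \<open>diamond ?D e = 0\<close> \<open>diamond ?D f = 0\<close> in \<open>simp_all add: diamond_self_adjoint_right\<close>)
qed

lemma Phi_peirce_decomposition: "\<Phi> x = \<Phi> (P11 x) + \<Phi> (P12 x) + \<Phi> (P21 x) + \<Phi> (P22 x)"
proof -
  have "P11 (P12 x + P21 x + P22 x) = 0"
    using peirce_components_unique(1)[OF eig_zero eig_P12 eig_P21 eig_P22, of "P12 x + P21 x + P22 x"]
    by (simp add: add.assoc)
  then have "\<Phi> x = \<Phi> (P12 x + P21 x + P22 x) + \<Phi> (P11 x)"
    using Phi_add_P11_zero_11[OF _ eig_P11] peirce_decomposition[of x]
    by (metis add.commute add.assoc)
  also have "P22 (P12 x + P21 x) = 0"
    using peirce_components_unique(4)[OF eig_zero eig_P12 eig_P21 eig_zero, of "P12 x + P21 x"]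
    by simp
  then have "\<Phi> (P12 x + P21 x + P22 x) = \<Phi> (P12 x) + \<Phi> (P21 x) + \<Phi> (P22 x)"
    using Phi_add_P22_zero_22[OF _ eig_P22] Phi_add_12_21[OF eig_P12 eig_P21] by simp
  finally show ?thesis by (simp add: algebra_simps)
qed

lemma Phi_add_peirce_components:
  assumes "eig w11 1 1" "eig w12 1 0" "eig w21 0 1" "eig w22 0 0"
  shows "\<Phi> (w11 + w12 + w21 + w22) = \<Phi> w11 + \<Phi> w12 + \<Phi> w21 + \<Phi> w22"
  using Phi_peirce_decomposition[of "w11 + w12 + w21 + w22"] peirce_components_unique[OF assms refl]
  by simp

lemma diamond_e_f: "diamond e f = 0"
  unfolding diamond_def by (simp add: mul_f_left mul_f_right)

lemma diamond_e_12: "eig b 1 0 \<Longrightarrow> diamond e b = b"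
  unfolding diamond_def eig_def by simp

lemma diamond_12_f: "eig a 1 0 \<Longrightarrow> diamond a f = a + \<sigma> *\<^sub>C star a"
  using eig_star[of a 1 0] unfolding diamond_def eig_def by (simp add: mul_f_left mul_f_right)

lemma Phi_add_e_12: "eig a 1 0 \<Longrightarrow> \<Phi> (e + a) = \<Phi> e + \<Phi> a"
  using Phi_add_peirce_components[OF eig_e _ eig_zero eig_zero] by simp

lemma Phi_add_f_12: "eig b 1 0 \<Longrightarrow> \<Phi> (f + b) = \<Phi> f + \<Phi> b"
  using Phi_add_peirce_components[OF eig_zero _ eig_zero eig_f] by (simp add: add.commute)

text \<open>The next two lemmas evaluate \<Phi> at a \<diamond> (f + b), resp. (e + a) \<diamond> (f + b), in two ways:
  by splitting the factors with the additivity of \<Phi> on f + b and e + a, and by splitting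
  the product into its Peirce components.\<close>

lemma Phi_add_star_12_mul_12:
  assumes a: "eig a 1 0" and b: "eig b 1 0"
  shows "\<Phi> (\<sigma> *\<^sub>C star a + mul a b) = \<Phi> (\<sigma> *\<^sub>C star a) + \<Phi> (mul a b)"
proof -
  have a': "eig (star a) 0 1" by (rule eig_star[OF a])
  have ab: "eig (mul a b) 0 1" by (rule eig_mul_12_12[OF a b])
  have ba': "eig (mul b (star a)) 1 1" by (rule eig_mul_12_21[OF b a'])
  have "\<Phi> (diamond a (f + b)) = \<Phi> (diamond a f) + \<Phi> (diamond a b)"
    by (rule Phi_additive_transfer(1)[OF Phi_add_f_12[OF b]])
  also have "\<dots> = \<Phi> a + \<Phi> (\<sigma> *\<^sub>C star a) + (\<Phi> (\<sigma> *\<^sub>C mul b (star a)) + \<Phi> (mul a b))"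
    unfolding diamond_12_f[OF a] diamond_def[of a b]
    using Phi_add_peirce_components[OF eig_zero a eig_scaleC[OF a'] eig_zero]
      Phi_add_peirce_components[OF eig_scaleC[OF ba'] eig_zero ab eig_zero]
    by (simp add: add.commute)
  finally have "\<Phi> (diamond a (f + b))
      = \<Phi> a + \<Phi> (\<sigma> *\<^sub>C star a) + (\<Phi> (\<sigma> *\<^sub>C mul b (star a)) + \<Phi> (mul a b))" .
  moreover have "\<Phi> (diamond a (f + b))
      = \<Phi> (\<sigma> *\<^sub>C mul b (star a)) + \<Phi> a + \<Phi> (\<sigma> *\<^sub>C star a + mul a b)"
    unfolding diamond_add_right diamond_12_f[OF a] diamond_def[of a b]
    using Phi_add_peirce_components[OF eig_scaleC[OF ba'] a eig_add[OF eig_scaleC[OF a'] ab] eig_zero]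
    by (simp add: algebra_simps)
  ultimately show ?thesis by (simp add: algebra_simps)
qed

lemma Phi_add_12:
  assumes a: "eig a 1 0" and b: "eig b 1 0"
  shows "\<Phi> (a + b) = \<Phi> a + \<Phi> b"
proof -
  have a': "eig (star a) 0 1" by (rule eig_star[OF a])
  have ab: "eig (mul a b) 0 1" by (rule eig_mul_12_12[OF a b])
  have ba': "eig (mul b (star a)) 1 1" by (rule eig_mul_12_21[OF b a'])
  have "\<Phi> (diamond (e + a) (f + b))
      = \<Phi> (diamond e f) + \<Phi> (diamond e b) + \<Phi> (diamond a f) + \<Phi> (diamond a b)"
    by (simp add: Phi_diamond Phi_add_e_12[OF a] Phi_add_f_12[OF b]
        diamondB_add_left diamondB_add_right add.assoc)
  also have "\<dots> = \<Phi> b + \<Phi> a + \<Phi> (\<sigma> *\<^sub>C star a) + (\<Phi> (\<sigma> *\<^sub>C mul b (star a)) + \<Phi> (mul a b))"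
    unfolding diamond_e_f diamond_e_12[OF b] diamond_12_f[OF a] diamond_def[of a b]
    using Phi_add_peirce_components[OF eig_zero a eig_scaleC[OF a'] eig_zero]
      Phi_add_peirce_components[OF eig_scaleC[OF ba'] eig_zero ab eig_zero]
    by (simp add: add.commute)
  finally have "\<Phi> (diamond (e + a) (f + b))
      = \<Phi> b + \<Phi> a + \<Phi> (\<sigma> *\<^sub>C star a) + (\<Phi> (\<sigma> *\<^sub>C mul b (star a)) + \<Phi> (mul a b))" .
  moreover have "\<Phi> (diamond (e + a) (f + b))
      = \<Phi> (\<sigma> *\<^sub>C mul b (star a)) + \<Phi> (a + b) + \<Phi> (\<sigma> *\<^sub>C star a + mul a b)"
    unfolding diamond_add_right diamond_add_left diamond_e_f diamond_e_12[OF b]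
      diamond_12_f[OF a] diamond_def[of a b]
    using Phi_add_peirce_components[OF eig_scaleC[OF ba'] eig_add[OF a b]
        eig_add[OF eig_scaleC[OF a'] ab] eig_zero]
    by (simp add: algebra_simps)
  ultimately show ?thesis
    unfolding Phi_add_star_12_mul_12[OF a b] by (simp add: algebra_simps)
qed

lemma Phi_add_11:
  assumes "prime_algebra mul" and a: "eig a 1 1" and b: "eig b 1 1"
  shows "\<Phi> (a + b) = \<Phi> a + \<Phi> b"
proof (rule Phi_addI)
  fix t assume t: "\<Phi> t = \<Phi> a + \<Phi> b"
  have "jordan f a = 0" "jordan f b = 0"
    using jordan_e_eig[OF a] jordan_e_eig[OF b] by (simp_all add: jordan_f scaleR_2)
  then have "jordan f (t - a - b) = 0" using jordan_eq_zero_if_one_vanishes[OF t] by simp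
  then have "jordan e t = t + t"
    unfolding jordan_f jordan_diff_right \<open>jordan f a = 0\<close>[unfolded jordan_f]
      \<open>jordan f b = 0\<close>[unfolded jordan_f] by (simp add: algebra_simps)
  then have t11: "eig t 1 1" by (rule eig_11_if_jordan_e)
  have diamond_11_12: "diamond z c = mul z c" if "eig z 1 1" "eig c 1 0" for z c
    unfolding diamond_def using that eig_star by (simp add: eig_mul_eq_zero)
  have "mul (t - a - b) c = 0" if c: "eig c 1 0" for c
  proof -
    have "\<Phi> (mul t c) = \<Phi> (mul a c) + \<Phi> (mul b c)"
      using Phi_additive_transfer(2)[OF t, of c] diamond_11_12 t11 a b c by simp
    also have "\<dots> = \<Phi> (mul a c + mul b c)"
      using Phi_add_12[OF eig_mul_11_12[OF a c] eig_mul_11_12[OF b c]] by simp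
    finally have "mul t c = mul a c + mul b c" by (rule Phi_inj)
    then show ?thesis by (simp add: mul_linear)
  qed
  then show "t - a - b = 0"
    using eig_11_eq_zero_if_annihilates_12[OF assms(1)] eig_diff[OF eig_diff[OF t11 a] b] by blast
qed

lemma Phi_add_peirce_11:
  assumes "prime_algebra mul" "x \<in> peirce mul e e" "y \<in> peirce mul e e"
  shows "\<Phi> (x + y) = \<Phi> x + \<Phi> y"
  using assms eig_P11 Phi_add_11 unfolding peirce_def P11_def by auto

end

lemma preserves_plus_or_minus_sign:
  fixes mulA :: "'a::complex_vector \<Rightarrow> 'a \<Rightarrow> 'a" and mulB :: "'b::complex_vector \<Rightarrow> 'b \<Rightarrow> 'b"
  assumes "preserves_plus mulA starA mulB starB \<Phi> \<or> preserves_minus mulA starA mulB starB \<Phi>"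
  obtains \<sigma> where "\<sigma> = 1 \<or> \<sigma> = -1"
    and "\<And>x y. \<Phi> (mulA x y + \<sigma> *\<^sub>C mulA y (starA x))
                 = mulB (\<Phi> x) (\<Phi> y) + \<sigma> *\<^sub>C mulB (\<Phi> y) (starB (\<Phi> x))"
proof (cases "preserves_plus mulA starA mulB starB \<Phi>")
  case True
  then show ?thesis using that[of 1] unfolding preserves_plus_def by (simp add: scaleC_one)
next
  case False
  then show ?thesis using assms that[of "-1"] unfolding preserves_minus_def by simp
qed

theorem claim2p7:
  fixes mulA :: "'a::{complex_normed_vector,banach} \<Rightarrow> 'a \<Rightarrow> 'a"
    and starA :: "'a \<Rightarrow> 'a"
    and mulB :: "'b::complex_vector \<Rightarrow> 'b \<Rightarrow> 'b"
    and starB :: "'b \<Rightarrow> 'b"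
    and \<Phi> :: "'a \<Rightarrow> 'b"
    and one :: 'a and p1 p2 :: 'a
  assumes "alt_W_star_factor mulA starA"
    and "alt_star_algebra mulB starB"
    and "bij \<Phi>"
    and "preserves_plus mulA starA mulB starB \<Phi> \<or> preserves_minus mulA starA mulB starB \<Phi>"
    and "is_unit mulA one"
    and "projection mulA starA p1" and "p1 \<noteq> one"
    and "p2 = one - p1"
  shows "(\<forall>a11\<in>peirce mulA p1 p1. \<forall>b11\<in>peirce mulA p1 p1.
            \<Phi> (a11 + b11) = \<Phi> a11 + \<Phi> b11) \<and>
         (\<forall>c22\<in>peirce mulA p2 p2. \<forall>d22\<in>peirce mulA p2 p2.
            \<Phi> (c22 + d22) = \<Phi> c22 + \<Phi> d22)"
proof -
  have A: "alt_star_algebra mulA starA" and prime: "prime_algebra mulA"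
    using assms(1) unfolding alt_W_star_factor_def alt_C_star_algebra_def by auto
  obtain \<sigma> where sign: "\<sigma> = 1 \<or> \<sigma> = -1"
    and pres: "\<And>x y. \<Phi> (mulA x y + \<sigma> *\<^sub>C mulA y (starA x))
                 = mulB (\<Phi> x) (\<Phi> y) + \<sigma> *\<^sub>C mulB (\<Phi> y) (starB (\<Phi> x))"
    using preserves_plus_or_minus_sign[OF assms(4)] by blast
  interpret P1: star_product_preserver mulA starA one p1 mulB starB \<Phi> \<sigma>
    using A assms(2,3,5-7) sign pres by unfold_locales
  interpret P2: star_product_preserver mulA starA one p2 mulB starB \<Phi> \<sigma>
    using A assms(2,3,5) P1.projection_f P1.f_neq_one sign pres
    unfolding assms(8) P1.f_def by unfold_locales
  show ?thesis using P1.Phi_add_peirce_11[OF prime] P2.Phi_add_peirce_11[OF prime] by blast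
qed

end
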